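(* For any based space $(X,x_0)$, the topology of $\pi_1^{\tau}(X,x_0)$ is the finest group topology on $\pi_1(X,x_0)$ for which the map $\pi:\Omega(X,x_0)\to\pi_1(X,x_0)$, $\alpha\mapsto[\alpha]$, is continuous. Equivalently, if $\Phi:\pi_1(X,x_0)\to G$ is a homomorphism to a topological group $G$ such that $\Phi\circ\pi:\Omega(X,x_0)\to G$ is continuous, then $\Phi:\pi_1^{\tau}(X,x_0)\to G$ is continuous.
   Context: $\Omega(X,x_0)$ is the space of loops at $x_0$ with the compact-open topology. $\pi_1^{qtop}(X,x_0)$ is $\pi_1(X,x_0)$ with the quotient topology with respect to $\pi$. $F_M(S)$ is the free (Markov) topological group on a space $S$. For a group with (arbitrary) topology $G$, $\tau(G)$ is $G$ with the quotient topology with respect to the multiplication epimorphism $m_G:F_M(G)\to G$ sending each generator $g$ to $g$. $\pi_1^{\tau}(X,x_0)=\tau(\pi_1^{qtop}(X,x_0))$. *)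

theory Defs
  imports "HOL-Analysis.Analysis" "HOL-Algebra.Group"
begin

definition group_topology :: "('g, 'b) monoid_scheme \<Rightarrow> 'g topology \<Rightarrow> bool" where
  "group_topology G T \<longleftrightarrow> group G \<and> topspace T = carrier G
     \<and> continuous_map (prod_topology T T) T (\<lambda>(x, y). x \<otimes>\<^bsub>G\<^esub> y)
     \<and> continuous_map T T (\<lambda>x. inv\<^bsub>G\<^esub> x)"

text \<open>Loops are represented as functions on [0,1], extensional (undefined outside [0,1]).\<close>

definition loop_space :: "'a topology \<Rightarrow> 'a \<Rightarrow> (real \<Rightarrow> 'a) set" where
  "loop_space X x0 = {g. pathin X g \<and> g 0 = x0 \<and> g 1 = x0 \<and> g \<in> extensional {0..1}}"

definition loop_space_top :: "'a topology \<Rightarrow> 'a \<Rightarrow> (real \<Rightarrow> 'a) topology" where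
  "loop_space_top X x0 = topology_generated_by
     {{g \<in> loop_space X x0. g ` K \<subseteq> U} | K U.
        compactin (subtopology euclideanreal {0..1}) K \<and> openin X U}"

definition loop_homotopic :: "'a topology \<Rightarrow> 'a \<Rightarrow> (real \<Rightarrow> 'a) \<Rightarrow> (real \<Rightarrow> 'a) \<Rightarrow> bool" where
  "loop_homotopic X x0 f g \<longleftrightarrow>
     homotopic_with (\<lambda>h. h 0 = x0 \<and> h 1 = x0) (subtopology euclideanreal {0..1}) X f g"

definition loop_class :: "'a topology \<Rightarrow> 'a \<Rightarrow> (real \<Rightarrow> 'a) \<Rightarrow> (real \<Rightarrow> 'a) set" where
  "loop_class X x0 f = {g \<in> loop_space X x0. loop_homotopic X x0 f g}"

text \<open>Concatenation of loops (same formula as joinpaths, for arbitrary point types).\<close>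
definition loop_concat :: "(real \<Rightarrow> 'a) \<Rightarrow> (real \<Rightarrow> 'a) \<Rightarrow> (real \<Rightarrow> 'a)" where
  "loop_concat f g = restrict (\<lambda>t. if t \<le> 1/2 then f (2 * t) else g (2 * t - 1)) {0..1}"

definition fundamental_group :: "'a topology \<Rightarrow> 'a \<Rightarrow> ((real \<Rightarrow> 'a) set) monoid" where
  "fundamental_group X x0 =
     \<lparr> carrier = loop_class X x0 ` loop_space X x0,
       mult = (\<lambda>A B. loop_class X x0
                 (loop_concat (SOME f. f \<in> A) (SOME g. g \<in> B))),
       one = loop_class X x0 (restrict (\<lambda>t. x0) {0..1}) \<rparr>"

definition pi1_qtop :: "'a topology \<Rightarrow> 'a \<Rightarrow> ((real \<Rightarrow> 'a) set) topology" where
  "pi1_qtop X x0 = topology (\<lambda>U. U \<subseteq> carrier (fundamental_group X x0) \<and>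
      openin (loop_space_top X x0) {g \<in> loop_space X x0. loop_class X x0 g \<in> U})"

text \<open>Words: letters (True, x) = x, (False, x) = x^{-1}.\<close>
definition reduce_word :: "(bool \<times> 's) list \<Rightarrow> (bool \<times> 's) list" where
  "reduce_word w = foldr (\<lambda>l acc. case acc of [] \<Rightarrow> [l]
      | l' # acc' \<Rightarrow> (if snd l = snd l' \<and> fst l \<noteq> fst l' then acc' else l # acc)) w []"

definition reduced_word :: "(bool \<times> 's) list \<Rightarrow> bool" where
  "reduced_word w \<longleftrightarrow> (\<forall>i. Suc i < length w \<longrightarrow>
      \<not> (snd (w ! i) = snd (w ! Suc i) \<and> fst (w ! i) \<noteq> fst (w ! Suc i)))"

definition free_group :: "'s set \<Rightarrow> ((bool \<times> 's) list) monoid" where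
  "free_group S = \<lparr> carrier = {w. reduced_word w \<and> snd ` set w \<subseteq> S},
                    mult = (\<lambda>v w. reduce_word (v @ w)),
                    one = [] \<rparr>"

definition free_gen :: "'s \<Rightarrow> (bool \<times> 's) list" where
  "free_gen x = [(True, x)]"

text \<open>F_M(S): the free group on the points of S with the finest group topology making
  the canonical map S to F(S) continuous (equivalently, the Markov universal property).\<close>
definition free_top_group :: "'s topology \<Rightarrow> ((bool \<times> 's) list) topology" where
  "free_top_group S = topology_generated_by
     (\<Union> {Collect (openin T) | T. group_topology (free_group (topspace S)) T
                                  \<and> continuous_map S T free_gen})"

definition word_mult :: "('g, 'b) monoid_scheme \<Rightarrow> (bool \<times> 'g) list \<Rightarrow> 'g" where
  "word_mult G w = foldr (\<lambda>(b, x) acc. (if b then x else inv\<^bsub>G\<^esub> x) \<otimes>\<^bsub>G\<^esub> acc) w \<one>\<^bsub>G\<^esub>"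

definition tau_top :: "('g, 'b) monoid_scheme \<Rightarrow> 'g topology \<Rightarrow> 'g topology" where
  "tau_top G T = topology (\<lambda>U. U \<subseteq> carrier G \<and>
      openin (free_top_group T) {w \<in> carrier (free_group (carrier G)). word_mult G w \<in> U})"

definition pi1_tau :: "'a topology \<Rightarrow> 'a \<Rightarrow> ((real \<Rightarrow> 'a) set) topology" where
  "pi1_tau X x0 = tau_top (fundamental_group X x0) (pi1_qtop X x0)"

end

theory Submission
  imports Defs
begin

text \<open>
  Write G = pi_1(X,x0), Q = pi_1^qtop(X,x0), and m_G : F_M(Q) \<rightarrow> G for the multiplication
  epimorphism, so that pi_1^tau(X,x0) = tau(G) is the quotient topology of m_G.

  The heart of the proof does not mention loops: for any group G and any topology Q on
  its carrier, tau(G) is the finest group topology on G that is coarser than Q.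
  (1) It is a group topology, since the quotient of a topological group by a surjective
      homomorphism is a topological group (the homomorphism is open, so m x m is again a
      quotient map and multiplication descends).
  (2) It is coarser than Q, since the generators Q \<rightarrow> F_M(Q) vary continuously and m_G
      fixes them.
  (3) It is the finest such: the pullback of a coarser group topology T along m_G is a
      group topology on the free group in which the generators are continuous, hence it is
      coarser than F_M(Q), which means exactly that T is coarser than tau(G).
  Since Q is the quotient topology of pi, a topology on G makes pi continuous iff it is
  coarser than Q; this is the first half of the theorem. The universal property for a
  homomorphism Phi into a topological group follows by applying it to the pullback of the
  target topology along Phi.
\<close>

subsection \<open>Quotient topologies\<close>

text \<open>The quotient topology on a set B induced by a map m from a subset A of a space F:
  a subset of B is open iff its preimage is open. Both pi_1^qtop and tau are of this form.\<close>
definition quotient_top :: "'h set \<Rightarrow> 'h topology \<Rightarrow> ('h \<Rightarrow> 'g) \<Rightarrow> 'g set \<Rightarrow> 'g topology" where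
  "quotient_top A F m B = topology (\<lambda>U. U \<subseteq> B \<and> openin F {w \<in> A. m w \<in> U})"

lemma istopology_quotient_top: "istopology (\<lambda>U. U \<subseteq> B \<and> openin F {w \<in> A. m w \<in> U})"
  unfolding istopology_def
proof (rule conjI; intro allI impI)
  fix S T assume "S \<subseteq> B \<and> openin F {w \<in> A. m w \<in> S}" "T \<subseteq> B \<and> openin F {w \<in> A. m w \<in> T}"
  moreover have "{w \<in> A. m w \<in> S \<inter> T} = {w \<in> A. m w \<in> S} \<inter> {w \<in> A. m w \<in> T}" by auto
  ultimately show "S \<inter> T \<subseteq> B \<and> openin F {w \<in> A. m w \<in> S \<inter> T}" by auto
next
  fix K assume K: "\<forall>S\<in>K. S \<subseteq> B \<and> openin F {w \<in> A. m w \<in> S}"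
  have "{w \<in> A. m w \<in> \<Union>K} = (\<Union>S\<in>K. {w \<in> A. m w \<in> S})" by auto
  moreover have "openin F (\<Union>S\<in>K. {w \<in> A. m w \<in> S})"
    using K by (intro openin_Union) auto
  ultimately show "\<Union>K \<subseteq> B \<and> openin F {w \<in> A. m w \<in> \<Union>K}" using K by auto
qed

lemma openin_quotient_top:
  "openin (quotient_top A F m B) U \<longleftrightarrow> U \<subseteq> B \<and> openin F {w \<in> A. m w \<in> U}"
  unfolding quotient_top_def topology_inverse'[OF istopology_quotient_top] ..

lemma quotient_map_quotient_top:
  assumes A: "A = topspace F" and onto: "m ` A = B"
  shows "quotient_map F (quotient_top A F m B) m"
proof -
  let ?Q = "quotient_top A F m B"
  have "{w \<in> A. m w \<in> B} = topspace F" using A onto by auto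
  then have "openin ?Q B" by (simp add: openin_quotient_top)
  then have "B \<subseteq> topspace ?Q" by (rule openin_subset)
  moreover have "topspace ?Q \<subseteq> B"
    using openin_quotient_top[of A F m B "topspace ?Q"] by simp
  ultimately have "topspace ?Q = B" by blast
  then show ?thesis
    unfolding quotient_map_def using A onto by (auto simp: openin_quotient_top)
qed

subsection \<open>Group topologies: pullbacks and quotients\<close>

lemma group_topologyD:
  assumes "group_topology G T"
  shows "group G" "topspace T = carrier G"
    "continuous_map (prod_topology T T) T (\<lambda>(x, y). x \<otimes>\<^bsub>G\<^esub> y)"
    "continuous_map T T (\<lambda>x. inv\<^bsub>G\<^esub> x)"
  using assms by (auto simp: group_topology_def)

lemma group_topology_pullback:
  assumes gt: "group_topology G T" and H: "group H" and h: "h \<in> hom H G"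
  shows "group_topology H (pullback_topology (carrier H) h T)"
proof -
  let ?P = "pullback_topology (carrier H) h T"
  note G = group_topologyD[OF gt]
  interpret gh: group_hom H G h using H G(1) h by (simp add: group_hom_def group_hom_axioms_def)
  have ts: "topspace ?P = carrier H"
    using G(2) by (auto simp: topspace_pullback_topology)
  have hc: "continuous_map ?P T h"
    using continuous_map_pullback[OF continuous_map_id[of T], of "carrier H" h] by simp
  have "continuous_map (prod_topology ?P ?P) T (\<lambda>(x, y). h x \<otimes>\<^bsub>G\<^esub> h y)"
    using continuous_map_compose[OF continuous_map_prod_top[THEN iffD2] G(3), of ?P ?P h h] hc
    by (simp add: o_def case_prod_unfold)
  then have "continuous_map (prod_topology ?P ?P) T (h \<circ> (\<lambda>(x, y). x \<otimes>\<^bsub>H\<^esub> y))"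
    by (rule continuous_map_eq) (auto simp: ts)
  then have mult: "continuous_map (prod_topology ?P ?P) ?P (\<lambda>(x, y). x \<otimes>\<^bsub>H\<^esub> y)"
    by (rule continuous_map_pullback') (auto simp: ts)
  have "continuous_map ?P T (h \<circ> (\<lambda>x. inv\<^bsub>H\<^esub> x))"
    using continuous_map_compose[OF hc G(4)] by (rule continuous_map_eq) (auto simp: ts)
  then have inv: "continuous_map ?P ?P (\<lambda>x. inv\<^bsub>H\<^esub> x)"
    by (rule continuous_map_pullback') (auto simp: ts)
  show ?thesis
    unfolding group_topology_def using H ts mult inv by blast
qed

lemma group_topology_right_translation:
  assumes gt: "group_topology H F" and k: "k \<in> carrier H"
  shows "continuous_map F F (\<lambda>w. w \<otimes>\<^bsub>H\<^esub> k)"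
proof -
  note H = group_topologyD[OF gt]
  have "continuous_map F (prod_topology F F) (\<lambda>w. (w, k))"
    by (rule continuous_map_pairedI[OF continuous_map_id[unfolded id_def]]) (simp add: H(2) k)
  from continuous_map_compose[OF this H(3)] show ?thesis by (simp add: o_def)
qed

text \<open>A homomorphism out of a topological group is an open map onto the quotient
  topology it induces: the saturation of an open set V is the union of the translates
  V k^{-1} over the kernel, each of which is open.\<close>
lemma open_map_quotient_hom:
  assumes gt: "group_topology H F" and G: "group G" and m: "m \<in> hom H G"
  shows "open_map F (quotient_top (carrier H) F m (carrier G)) m"
  unfolding open_map_def
proof (intro allI impI)
  fix V assume V: "openin F V"
  note H = group_topologyD[OF gt]
  interpret gh: group_hom H G m using H(1) G m by (simp add: group_hom_def group_hom_axioms_def)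
  have Vc: "V \<subseteq> carrier H" using openin_subset[OF V] H(2) by simp
  let ?K = "{k \<in> carrier H. m k = \<one>\<^bsub>G\<^esub>}"
  have saturation: "{w \<in> carrier H. m w \<in> m ` V} = (\<Union>k\<in>?K. {w \<in> topspace F. w \<otimes>\<^bsub>H\<^esub> k \<in> V})"
  proof (intro equalityI subsetI)
    fix w assume "w \<in> {w \<in> carrier H. m w \<in> m ` V}"
    then obtain v where w: "w \<in> carrier H" and v: "v \<in> V" "m w = m v" by auto
    have vc: "v \<in> carrier H" using v Vc by auto
    let ?k = "inv\<^bsub>H\<^esub> w \<otimes>\<^bsub>H\<^esub> v"
    have "?k \<in> ?K" using w vc v by (simp add: gh.hom_mult gh.hom_inv G group.l_inv)
    moreover have "w \<otimes>\<^bsub>H\<^esub> ?k = v" using w vc by (simp add: gh.G.m_assoc[symmetric])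
    ultimately show "w \<in> (\<Union>k\<in>?K. {w \<in> topspace F. w \<otimes>\<^bsub>H\<^esub> k \<in> V})" using w v H(2) by auto
  next
    fix w assume "w \<in> (\<Union>k\<in>?K. {w \<in> topspace F. w \<otimes>\<^bsub>H\<^esub> k \<in> V})"
    then obtain k where k: "k \<in> carrier H" "m k = \<one>\<^bsub>G\<^esub>" and w: "w \<in> carrier H" "w \<otimes>\<^bsub>H\<^esub> k \<in> V"
      using H(2) by auto
    have "m (w \<otimes>\<^bsub>H\<^esub> k) = m w" using k w by (simp add: gh.hom_mult)
    then show "w \<in> {w \<in> carrier H. m w \<in> m ` V}" using w by (metis (mono_tags, lifting) image_eqI mem_Collect_eq)
  qed
  have "openin F (\<Union>k\<in>?K. {w \<in> topspace F. w \<otimes>\<^bsub>H\<^esub> k \<in> V})"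
  proof (rule openin_Union, clarify)
    fix k assume "k \<in> carrier H" "m k = \<one>\<^bsub>G\<^esub>"
    then have "continuous_map F F (\<lambda>w. w \<otimes>\<^bsub>H\<^esub> k)" by (intro group_topology_right_translation[OF gt])
    then show "openin F {w \<in> topspace F. w \<otimes>\<^bsub>H\<^esub> k \<in> V}"
      using V unfolding continuous_map_def by blast
  qed
  moreover have "m ` V \<subseteq> carrier G" using Vc by auto
  ultimately show "openin (quotient_top (carrier H) F m (carrier G)) (m ` V)"
    unfolding openin_quotient_top saturation by simp
qed

text \<open>Products of open maps are open; needed to see that m x m is a quotient map.\<close>
lemma open_map_prod:
  assumes f: "open_map X X' f" and g: "open_map Y Y' g"
  shows "open_map (prod_topology X Y) (prod_topology X' Y') (\<lambda>(x, y). (f x, g y))"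
  unfolding open_map_def
proof (intro allI impI)
  fix W assume W: "openin (prod_topology X Y) W"
  show "openin (prod_topology X' Y') ((\<lambda>(x, y). (f x, g y)) ` W)"
    unfolding openin_prod_topology_alt
  proof (intro allI impI)
    fix x' y' assume "(x', y') \<in> (\<lambda>(x, y). (f x, g y)) ` W"
    then obtain x y where xy: "(x, y) \<in> W" "x' = f x" "y' = g y" by auto
    then obtain U V where UV: "openin X U" "openin Y V" "x \<in> U" "y \<in> V" "U \<times> V \<subseteq> W"
      using W unfolding openin_prod_topology_alt by meson
    have "f ` U \<times> g ` V \<subseteq> (\<lambda>(x, y). (f x, g y)) ` W"
      using UV(5) by auto
    moreover have "openin X' (f ` U)" "openin Y' (g ` V)"
      using f g UV(1,2) by (auto simp: open_map_def)
    ultimately show "\<exists>U' V'. openin X' U' \<and> openin Y' V' \<and> x' \<in> U' \<and> y' \<in> V'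
        \<and> U' \<times> V' \<subseteq> (\<lambda>(x, y). (f x, g y)) ` W"
      using xy UV(3,4) by blast
  qed
qed

text \<open>The quotient of a topological group by a surjective homomorphism is a topological
  group. Multiplication and inversion descend along the quotient maps m x m and m.\<close>
lemma group_topology_quotient:
  assumes gt: "group_topology H F" and G: "group G" and m: "m \<in> hom H G"
    and onto: "m ` carrier H = carrier G"
  shows "group_topology G (quotient_top (carrier H) F m (carrier G))"
proof -
  let ?Q = "quotient_top (carrier H) F m (carrier G)"
  let ?mm = "\<lambda>(x, y). (m x, m y)"
  note H = group_topologyD[OF gt]
  interpret gh: group_hom H G m using H(1) G m by (simp add: group_hom_def group_hom_axioms_def)
  have q: "quotient_map F ?Q m"
    by (rule quotient_map_quotient_top) (use H(2) onto in auto)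
  have tQ: "topspace ?Q = carrier G"
    using quotient_imp_surjective_map[OF q] H(2) onto by simp
  have mc: "continuous_map F ?Q m" by (rule quotient_imp_continuous_map[OF q])
  have om: "open_map F ?Q m" by (rule open_map_quotient_hom[OF gt G m])
  have "quotient_map (prod_topology F F) (prod_topology ?Q ?Q) ?mm"
  proof (rule continuous_open_imp_quotient_map)
    show "continuous_map (prod_topology F F) (prod_topology ?Q ?Q) ?mm"
      using mc by (simp add: continuous_map_prod_top)
    show "open_map (prod_topology F F) (prod_topology ?Q ?Q) ?mm"
      by (rule open_map_prod[OF om om])
    show "?mm ` topspace (prod_topology F F) = topspace (prod_topology ?Q ?Q)"
      using quotient_imp_surjective_map[OF q] by (simp add: image_paired_Times)
  qed
  moreover have "continuous_map (prod_topology F F) ?Q ((\<lambda>(x, y). x \<otimes>\<^bsub>G\<^esub> y) \<circ> ?mm)"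
    using continuous_map_compose[OF H(3) mc]
    by (rule continuous_map_eq) (auto simp: H(2) gh.hom_mult)
  ultimately have mult: "continuous_map (prod_topology ?Q ?Q) ?Q (\<lambda>(x, y). x \<otimes>\<^bsub>G\<^esub> y)"
    by (rule continuous_compose_quotient_map)
  have "continuous_map F ?Q ((\<lambda>x. inv\<^bsub>G\<^esub> x) \<circ> m)"
    using continuous_map_compose[OF H(4) mc]
    by (rule continuous_map_eq) (auto simp: H(2) gh.hom_inv)
  then have inv: "continuous_map ?Q ?Q (\<lambda>x. inv\<^bsub>G\<^esub> x)"
    by (rule continuous_compose_quotient_map[OF q])
  show ?thesis
    unfolding group_topology_def using G tQ mult inv by blast
qed

subsection \<open>The fundamental group is a group\<close>

abbreviation unit_interval :: "real topology" where
  "unit_interval \<equiv> top_of_set {0..1}"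

lemma loop_homotopic_iff:
  "loop_homotopic X x0 f g \<longleftrightarrow>
   (\<exists>H. continuous_map (prod_topology unit_interval unit_interval) X H \<and> (\<forall>x\<in>{0..1}. H(0,x) = f x)
      \<and> (\<forall>x\<in>{0..1}. H(1,x) = g x) \<and> (\<forall>t\<in>{0..1}. H(t,0) = x0 \<and> H(t,1) = x0))"
  unfolding loop_homotopic_def
  by (subst homotopic_with) auto

lemma convex_comb_unit_interval:
  fixes s u v :: real
  assumes a: "0 \<le> s" "s \<le> 1" "0 \<le> u" "u \<le> 1" "0 \<le> v" "v \<le> 1"
  shows "0 \<le> (1-s)*u + s * v \<and> (1-s)*u + s * v \<le> 1"
proof -
  have "(1-s)*u \<le> (1-s)*1" using a by (intro mult_left_mono) auto
  moreover have "s * v \<le> s*1" using a by (intro mult_left_mono) auto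
  ultimately show ?thesis using a by auto
qed

text \<open>Two reparametrisations of the same path by maps of [0,1] with equal endpoints are
  homotopic rel endpoints, via the straight-line homotopy between the parameter maps.
  This gives associativity, the unit law and inverses in pi_1.\<close>
lemma loop_homotopic_reparam:
  assumes a: "pathin X a"
    and cp: "continuous_on {0..1} pp" and cc: "continuous_on {0..1} qq"
    and rp: "pp ` {0..1} \<subseteq> {0..1}" and rc: "qq ` {0..1} \<subseteq> {0..1}"
    and e0: "pp 0 = qq 0" and e1: "pp 1 = qq 1"
    and x0: "a (pp 0) = x0" and x1: "a (pp 1) = x0"
    and g: "\<And>x. x \<in> {0..1} \<Longrightarrow> g x = a (pp x)"
    and h: "\<And>x. x \<in> {0..1} \<Longrightarrow> h x = a (qq x)"
  shows "loop_homotopic X x0 g h"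
proof -
  define k where "k = (\<lambda>z::real\<times>real. (1 - fst z) * pp (snd z) + fst z * qq (snd z))"
  have c1: "continuous_on ({0..1}\<times>{0..1}) (\<lambda>z::real\<times>real. pp (snd z))"
    by (rule continuous_on_compose2[OF cp continuous_on_snd]) auto
  have c2: "continuous_on ({0..1}\<times>{0..1}) (\<lambda>z::real\<times>real. qq (snd z))"
    by (rule continuous_on_compose2[OF cc continuous_on_snd]) auto
  have kc: "continuous_on ({0..1}\<times>{0..1}) k"
    unfolding k_def by (intro continuous_intros c1 c2)
  have kr: "k \<in> ({0..1}\<times>{0..1}) \<rightarrow> {0..1}"
  proof
    fix z :: "real\<times>real" assume z: "z \<in> {0..1}\<times>{0..1}"
    then have "pp (snd z) \<in> {0..1}" "qq (snd z) \<in> {0..1}" using rp rc by auto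
    then show "k z \<in> {0..1}" using z convex_comb_unit_interval[of "fst z" "pp (snd z)" "qq (snd z)"]
      unfolding k_def by auto
  qed
  have "continuous_map (prod_topology unit_interval unit_interval) unit_interval k"
    using kc kr by simp
  then have H: "continuous_map (prod_topology unit_interval unit_interval) X (a \<circ> k)"
    using a unfolding pathin_def by (rule continuous_map_compose)
  show ?thesis
    unfolding loop_homotopic_iff
  proof (intro exI conjI ballI)
    show "continuous_map (prod_topology unit_interval unit_interval) X (a \<circ> k)" by (rule H)
  qed (auto simp: k_def g h e0 e1 x0 x1 algebra_simps simp flip: e0 e1)
qed

lemma continuous_map_paste_paths:
  assumes f: "pathin X f" and g: "pathin X g" and fg: "f 1 = g 0"
  shows "continuous_map unit_interval X (\<lambda>t. if t \<le> 1/2 then f (2*t) else g (2*t - 1))"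
proof (rule continuous_map_cases_le)
  show "continuous_map unit_interval euclideanreal (\<lambda>x. x)" by simp
  show "continuous_map unit_interval euclideanreal (\<lambda>x. 1/2)" by simp
  have "continuous_map (top_of_set ({0..1} \<inter> {x. x \<in> topspace unit_interval \<and> x \<le> 1/2})) unit_interval (\<lambda>t. 2*t)"
    by (auto intro!: continuous_intros)
  then show "continuous_map (subtopology unit_interval {x. x \<in> topspace unit_interval \<and> x \<le> 1/2}) X (\<lambda>t. f (2*t))"
    using f unfolding pathin_def subtopology_subtopology
    by (rule continuous_map_compose[unfolded o_def])
  have "continuous_map (top_of_set ({0..1} \<inter> {x. x \<in> topspace unit_interval \<and> 1/2 \<le> x})) unit_interval (\<lambda>t. 2*t - 1)"
    by (auto intro!: continuous_intros)
  then show "continuous_map (subtopology unit_interval {x. x \<in> topspace unit_interval \<and> 1/2 \<le> x}) X (\<lambda>t. g (2*t - 1))"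
    using g unfolding pathin_def subtopology_subtopology
    by (rule continuous_map_compose[unfolded o_def])
next
  fix x assume "x \<in> topspace unit_interval" "x = (1/2::real)"
  then have x: "2*x = 1" by simp
  show "f (2*x) = g (2*x - 1)" using fg by (simp add: x)
qed

lemma loop_spaceD:
  assumes "f \<in> loop_space X x0"
  shows "pathin X f" "f 0 = x0" "f 1 = x0" "f \<in> extensional {0..1}"
  using assms unfolding loop_space_def by auto

lemma loop_concat_eq: "t \<in> {0..1} \<Longrightarrow> loop_concat f g t = (if t \<le> 1/2 then f (2*t) else g (2*t - 1))"
  unfolding loop_concat_def by simp

lemma pathin_loop_concat:
  assumes "pathin X f" "pathin X g" "f 1 = g 0"
  shows "pathin X (loop_concat f g)"
  unfolding pathin_def
  by (rule continuous_map_eq[OF continuous_map_paste_paths[OF assms, unfolded pathin_def]])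
     (simp add: loop_concat_eq)

lemma loop_concat_in:
  assumes "f \<in> loop_space X x0" "g \<in> loop_space X x0"
  shows "loop_concat f g \<in> loop_space X x0"
proof -
  have "pathin X (loop_concat f g)"
    using assms by (intro pathin_loop_concat) (auto dest: loop_spaceD)
  then show ?thesis using assms
    unfolding loop_space_def by (auto simp: loop_concat_eq loop_concat_def)
qed

lemma loop_homotopic_concat:
  assumes "loop_homotopic X x0 f f'" "loop_homotopic X x0 g g'"
  shows "loop_homotopic X x0 (loop_concat f g) (loop_concat f' g')"
proof -
  obtain H1 where H1: "continuous_map (prod_topology unit_interval unit_interval) X H1" "\<forall>x\<in>{0..1}. H1(0,x) = f x"
      "\<forall>x\<in>{0..1}. H1(1,x) = f' x" "\<forall>t\<in>{0..1}. H1(t,0) = x0 \<and> H1(t,1) = x0"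
    using assms(1) unfolding loop_homotopic_iff by blast
  obtain H2 where H2: "continuous_map (prod_topology unit_interval unit_interval) X H2" "\<forall>x\<in>{0..1}. H2(0,x) = g x"
      "\<forall>x\<in>{0..1}. H2(1,x) = g' x" "\<forall>t\<in>{0..1}. H2(t,0) = x0 \<and> H2(t,1) = x0"
    using assms(2) unfolding loop_homotopic_iff by blast
  let ?S = "{0..1::real}\<times>{0..1::real}"
  let ?H = "\<lambda>z::real\<times>real. if snd z \<le> 1/2 then H1 (fst z, 2 * snd z) else H2 (fst z, 2 * snd z - 1)"
  have cH: "continuous_map (prod_topology unit_interval unit_interval) X ?H"
  proof (rule continuous_map_cases_le)
    show "continuous_map (prod_topology unit_interval unit_interval) euclideanreal snd"
      by (simp add: continuous_on_snd)
    show "continuous_map (prod_topology unit_interval unit_interval) euclideanreal (\<lambda>x. 1/2)" by simp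
    have "continuous_map (top_of_set (?S \<inter> {x. x \<in> topspace (prod_topology unit_interval unit_interval) \<and> snd x \<le> 1/2}))
             (top_of_set ?S) (\<lambda>z. (fst z, 2 * snd z))"
      by (auto intro!: continuous_intros)
    then show "continuous_map (subtopology (prod_topology unit_interval unit_interval) {x. x \<in> topspace (prod_topology unit_interval unit_interval) \<and> snd x \<le> 1/2}) X
        (\<lambda>z. H1 (fst z, 2 * snd z))"
      using H1(1) unfolding prod_topology_subtopology_eu subtopology_subtopology
      by (rule continuous_map_compose[unfolded o_def])
    have "continuous_map (top_of_set (?S \<inter> {x. x \<in> topspace (prod_topology unit_interval unit_interval) \<and> 1/2 \<le> snd x}))
             (top_of_set ?S) (\<lambda>z. (fst z, 2 * snd z - 1))"
      by (auto intro!: continuous_intros)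
    then show "continuous_map (subtopology (prod_topology unit_interval unit_interval) {x. x \<in> topspace (prod_topology unit_interval unit_interval) \<and> 1/2 \<le> snd x}) X
        (\<lambda>z. H2 (fst z, 2 * snd z - 1))"
      using H2(1) unfolding prod_topology_subtopology_eu subtopology_subtopology
      by (rule continuous_map_compose[unfolded o_def])
  next
    fix z :: "real\<times>real" assume z: "z \<in> topspace (prod_topology unit_interval unit_interval)" "snd z = 1/2"
    then have x: "2 * snd z = 1" by simp
    have "fst z \<in> {0..1}" using z(1) by (auto simp: mem_Times_iff)
    then show "H1 (fst z, 2 * snd z) = H2 (fst z, 2 * snd z - 1)" using H1 H2 by (simp add: x)
  qed
  show ?thesis
    unfolding loop_homotopic_iff using cH H1 H2
    by (intro exI[of _ ?H]) (auto simp: loop_concat_eq)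
qed

lemma loop_homotopic_refl: "f \<in> loop_space X x0 \<Longrightarrow> loop_homotopic X x0 f f"
  unfolding loop_homotopic_def loop_space_def pathin_def by simp

lemma loop_homotopic_sym: "loop_homotopic X x0 f g \<Longrightarrow> loop_homotopic X x0 g f"
  unfolding loop_homotopic_def by (rule homotopic_with_symD)

lemma loop_homotopic_trans: "loop_homotopic X x0 f g \<Longrightarrow> loop_homotopic X x0 g h \<Longrightarrow> loop_homotopic X x0 f h"
  unfolding loop_homotopic_def by (rule homotopic_with_trans)

lemma loop_class_eq: "loop_homotopic X x0 f g \<Longrightarrow> loop_class X x0 f = loop_class X x0 g"
  unfolding loop_class_def by (blast intro: loop_homotopic_sym loop_homotopic_trans)

lemma loop_class_self: "f \<in> loop_space X x0 \<Longrightarrow> f \<in> loop_class X x0 f"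
  unfolding loop_class_def by (simp add: loop_homotopic_refl)

lemma loop_class_some:
  assumes "f \<in> loop_space X x0"
  shows "(SOME h. h \<in> loop_class X x0 f) \<in> loop_space X x0"
    "loop_homotopic X x0 f (SOME h. h \<in> loop_class X x0 f)"
proof -
  have "(SOME h. h \<in> loop_class X x0 f) \<in> loop_class X x0 f"
    using loop_class_self[OF assms] by (rule someI[where P="\<lambda>h. h \<in> loop_class X x0 f"])
  then show "(SOME h. h \<in> loop_class X x0 f) \<in> loop_space X x0"
    "loop_homotopic X x0 f (SOME h. h \<in> loop_class X x0 f)"
    unfolding loop_class_def by auto
qed

lemma fundamental_group_mult:
  assumes "a \<in> loop_space X x0" "b \<in> loop_space X x0"
  shows "loop_class X x0 a \<otimes>\<^bsub>fundamental_group X x0\<^esub> loop_class X x0 b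
         = loop_class X x0 (loop_concat a b)"
  unfolding fundamental_group_def monoid.simps
  by (rule loop_class_eq, rule loop_homotopic_sym, rule loop_homotopic_concat[OF loop_class_some(2)[OF assms(1)] loop_class_some(2)[OF assms(2)]])

definition const_loop :: "'a \<Rightarrow> real \<Rightarrow> 'a" where
  "const_loop x0 = restrict (\<lambda>t. x0) {0..1}"

definition rev_loop :: "(real \<Rightarrow> 'a) \<Rightarrow> real \<Rightarrow> 'a" where
  "rev_loop f = restrict (\<lambda>t. f (1 - t)) {0..1}"

lemma const_loop_in: "x0 \<in> topspace X \<Longrightarrow> const_loop x0 \<in> loop_space X x0"
  unfolding loop_space_def const_loop_def pathin_def
  by (auto intro: continuous_map_eq[OF continuous_map_const[THEN iffD2]])

lemma rev_loop_in:
  assumes "f \<in> loop_space X x0" shows "rev_loop f \<in> loop_space X x0"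
proof -
  have "continuous_map unit_interval unit_interval (\<lambda>t. 1 - t)"
    by (auto intro!: continuous_intros)
  then have "continuous_map unit_interval X (\<lambda>t. f (1 - t))"
    using loop_spaceD(1)[OF assms] unfolding pathin_def
    by (rule continuous_map_compose[unfolded o_def])
  then have "pathin X (rev_loop f)"
    unfolding pathin_def rev_loop_def by (rule continuous_map_eq) auto
  then show ?thesis using loop_spaceD[OF assms] unfolding loop_space_def rev_loop_def by auto
qed

lemma fundamental_group_carrier: "carrier (fundamental_group X x0) = loop_class X x0 ` loop_space X x0"
  by (simp add: fundamental_group_def)

lemma fundamental_group_one: "\<one>\<^bsub>fundamental_group X x0\<^esub> = loop_class X x0 (const_loop x0)"
  by (simp add: fundamental_group_def const_loop_def)

lemma loop_concat_assoc_homotopic: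
  assumes a: "a \<in> loop_space X x0" and b: "b \<in> loop_space X x0" and c: "c \<in> loop_space X x0"
  shows "loop_homotopic X x0 (loop_concat (loop_concat a b) c) (loop_concat a (loop_concat b c))"
proof (rule loop_homotopic_reparam[where pp = "\<lambda>t. min (2*t) (min (t + 1/4) ((t+1)/2))" and qq = "\<lambda>t. t"])
  have bc: "loop_concat b c \<in> loop_space X x0" using b c by (rule loop_concat_in)
  have abc: "loop_concat a (loop_concat b c) \<in> loop_space X x0" by (rule loop_concat_in[OF a bc])
  then show "pathin X (loop_concat a (loop_concat b c))" by (rule loop_spaceD)
  show "continuous_on {0..1} (\<lambda>t::real. min (2*t) (min (t + 1/4) ((t+1)/2)))"
    by (intro continuous_intros) auto
  show "(\<lambda>t::real. min (2*t) (min (t + 1/4) ((t+1)/2))) ` {0..1} \<subseteq> {0..1}" by (auto simp: min_def)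
  show "loop_concat a (loop_concat b c) (min (2 * 0) (min (0 + 1 / 4) ((0 + 1) / 2))) = x0"
    using loop_spaceD[OF abc] by simp
  show "loop_concat a (loop_concat b c) (min (2 * 1) (min (1 + 1 / 4) ((1 + 1) / 2))) = x0"
    using loop_spaceD[OF abc] by simp
  fix x :: real assume x: "x \<in> {0..1}"
  show "loop_concat (loop_concat a b) c x =
      loop_concat a (loop_concat b c) (min (2 * x) (min (x + 1 / 4) ((x + 1) / 2)))"
  proof -
    consider "x \<le> 1/4" | "1/4 < x" "x \<le> 1/2" | "1/2 < x" by linarith
    then show ?thesis
      by cases (use x loop_spaceD[OF b] in \<open>auto simp: loop_concat_eq min_def algebra_simps intro!: arg_cong[where f = c]\<close>)
  qed
qed (auto intro: continuous_intros)

lemma loop_concat_const_homotopic: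
  assumes a: "a \<in> loop_space X x0"
  shows "loop_homotopic X x0 (loop_concat (const_loop x0) a) a"
proof (rule loop_homotopic_reparam[where pp = "\<lambda>t. max 0 (2*t - 1)" and qq = "\<lambda>t. t" and a = a])
  show "pathin X a" using a by (rule loop_spaceD)
  show "(\<lambda>t::real. max 0 (2*t - 1)) ` {0..1} \<subseteq> {0..1}" by (auto simp: max_def)
  fix x :: real assume x: "x \<in> {0..1}"
  show "loop_concat (const_loop x0) a x = a (max 0 (2 * x - 1))"
  proof (cases "x = 1/2")
    case True show ?thesis unfolding True using loop_spaceD[OF a]
      by (simp add: loop_concat_eq const_loop_def)
  next
    case False then show ?thesis using x loop_spaceD[OF a]
      by (auto simp: loop_concat_eq max_def const_loop_def)
  qed
qed (use loop_spaceD[OF a] in \<open>auto intro!: continuous_intros\<close>)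

lemma loop_concat_rev_homotopic:
  assumes a: "a \<in> loop_space X x0"
  shows "loop_homotopic X x0 (loop_concat (rev_loop a) a) (const_loop x0)"
proof (rule loop_homotopic_reparam[where pp = "\<lambda>t. \<bar>2*t - 1\<bar>" and qq = "\<lambda>t. 1" and a = a])
  show "pathin X a" using a by (rule loop_spaceD)
  show "(\<lambda>t::real. \<bar>2*t - 1\<bar>) ` {0..1} \<subseteq> {0..1}" by auto
  fix x :: real assume x: "x \<in> {0..1}"
  show "loop_concat (rev_loop a) a x = a \<bar>2 * x - 1\<bar>"
  proof (cases "x = 1/2")
    case True show ?thesis unfolding True using loop_spaceD[OF a]
      by (simp add: loop_concat_eq rev_loop_def)
  next
    case False then show ?thesis using x loop_spaceD[OF a]
      by (auto simp: loop_concat_eq rev_loop_def abs_if)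
  qed
  show "const_loop x0 x = a 1" using x loop_spaceD[OF a] by (simp add: const_loop_def)
qed (use loop_spaceD[OF a] in \<open>auto intro!: continuous_intros\<close>)

text \<open>pi_1(X,x0) is a group (left unit and left inverses
  suffice for the library's introduction rule).\<close>
lemma group_fundamental_group:
  assumes x0: "x0 \<in> topspace X"
  shows "group (fundamental_group X x0)"
proof (rule groupI)
  let ?G = "fundamental_group X x0"
  show "x \<otimes>\<^bsub>?G\<^esub> y \<in> carrier ?G" if "x \<in> carrier ?G" "y \<in> carrier ?G" for x y
    using that by (auto simp: fundamental_group_carrier fundamental_group_mult loop_concat_in)
  show "\<one>\<^bsub>?G\<^esub> \<in> carrier ?G" using x0 by (simp add: fundamental_group_carrier fundamental_group_one const_loop_in)
  show "x \<otimes>\<^bsub>?G\<^esub> y \<otimes>\<^bsub>?G\<^esub> z = x \<otimes>\<^bsub>?G\<^esub> (y \<otimes>\<^bsub>?G\<^esub> z)"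
    if xyz: "x \<in> carrier ?G" "y \<in> carrier ?G" "z \<in> carrier ?G" for x y z
  proof -
    obtain a b c where "a \<in> loop_space X x0" "b \<in> loop_space X x0" "c \<in> loop_space X x0"
      "x = loop_class X x0 a" "y = loop_class X x0 b" "z = loop_class X x0 c"
      using xyz unfolding fundamental_group_carrier image_iff by blast
    then show ?thesis by (simp add: fundamental_group_mult loop_concat_in loop_class_eq[OF loop_concat_assoc_homotopic])
  qed
  show "\<one>\<^bsub>?G\<^esub> \<otimes>\<^bsub>?G\<^esub> x = x" if xG: "x \<in> carrier ?G" for x
  proof -
    obtain a where "a \<in> loop_space X x0" "x = loop_class X x0 a"
      using xG unfolding fundamental_group_carrier image_iff by blast
    then show ?thesis using x0 by (simp add: fundamental_group_one fundamental_group_mult const_loop_in loop_class_eq[OF loop_concat_const_homotopic])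
  qed
  show "\<exists>y\<in>carrier ?G. y \<otimes>\<^bsub>?G\<^esub> x = \<one>\<^bsub>?G\<^esub>" if xG: "x \<in> carrier ?G" for x
  proof -
    obtain a where a: "a \<in> loop_space X x0" "x = loop_class X x0 a"
      using xG unfolding fundamental_group_carrier image_iff by blast
    have "loop_class X x0 (rev_loop a) \<otimes>\<^bsub>?G\<^esub> x = \<one>\<^bsub>?G\<^esub>"
      using a rev_loop_in[OF a(1)] by (simp add: fundamental_group_one fundamental_group_mult loop_class_eq[OF loop_concat_rev_homotopic])
    moreover have "loop_class X x0 (rev_loop a) \<in> carrier ?G"
      using rev_loop_in[OF a(1)] by (simp add: fundamental_group_carrier)
    ultimately show ?thesis by blast
  qed
qed

subsection \<open>Free groups on reduced words\<close>

text \<open>Free reduction is a right fold of the single step that pushes a letter onto an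
  already reduced word, cancelling it against the head if they are inverse.\<close>
definition reduce_step :: "bool \<times> 's \<Rightarrow> (bool \<times> 's) list \<Rightarrow> (bool \<times> 's) list" where
  "reduce_step l acc = (case acc of [] \<Rightarrow> [l]
      | l' # acc' \<Rightarrow> (if snd l = snd l' \<and> fst l \<noteq> fst l' then acc' else l # acc))"

definition inv_letter :: "bool \<times> 's \<Rightarrow> bool \<times> 's" where "inv_letter l = (\<not> fst l, snd l)"

lemma reduce_word_foldr: "reduce_word w = foldr reduce_step w []"
  unfolding reduce_word_def reduce_step_def by simp

lemma cancels_iff: "(snd l = snd l' \<and> fst l \<noteq> fst l') \<longleftrightarrow> l' = inv_letter l"
  by (cases l; cases l') (auto simp: inv_letter_def)

lemma inv_letter_inv_letter[simp]: "inv_letter (inv_letter l) = l" by (simp add: inv_letter_def)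

lemma reduce_step_Nil[simp]: "reduce_step l [] = [l]" by (simp add: reduce_step_def)
lemma reduce_step_Cons: "reduce_step l (l' # acc) = (if l' = inv_letter l then acc else l # l' # acc)"
  unfolding reduce_step_def by (simp only: list.case cancels_iff)

lemma reduced_Nil[simp]: "reduced_word []" by (simp add: reduced_word_def)
lemma reduced_single[simp]: "reduced_word [l]" by (simp add: reduced_word_def)
lemma reduced_Cons_Cons: "reduced_word (l # l' # w) \<longleftrightarrow> l' \<noteq> inv_letter l \<and> reduced_word (l' # w)"
proof -
  have all_nat: "(\<forall>i. P i) \<longleftrightarrow> P 0 \<and> (\<forall>i. P (Suc i))" for P :: "nat \<Rightarrow> bool"
    by (metis not0_implies_Suc)
  have "reduced_word (l # l' # w) \<longleftrightarrow> \<not> (snd l = snd l' \<and> fst l \<noteq> fst l') \<and> reduced_word (l' # w)"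
    unfolding reduced_word_def by (subst all_nat) simp
  then show ?thesis using cancels_iff[of l l'] by blast
qed

lemma reduced_word_tl: "reduced_word (l # w) \<Longrightarrow> reduced_word w"
  by (cases w) (auto simp: reduced_Cons_Cons)

lemma reduced_reduce_step: "reduced_word acc \<Longrightarrow> reduced_word (reduce_step l acc)"
  by (cases acc) (auto simp: reduce_step_Cons reduced_Cons_Cons intro: reduced_word_tl)

lemma reduce_step_inv_letter: "reduced_word acc \<Longrightarrow> reduce_step l (reduce_step (inv_letter l) acc) = acc"
proof (cases acc)
  case (Cons l' acc')
  assume r: "reduced_word acc"
  show ?thesis
  proof (cases "l' = l")
    case True
    then show ?thesis using r Cons
      by (cases acc') (auto simp: reduce_step_Cons reduced_Cons_Cons inv_letter_def)
  next
    case False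
    then show ?thesis using Cons by (auto simp: reduce_step_Cons inv_letter_def)
  qed
qed (simp add: reduce_step_Cons)

lemma reduced_foldr_reduce_step: "reduced_word acc \<Longrightarrow> reduced_word (foldr reduce_step u acc)"
  by (induction u) (auto intro: reduced_reduce_step)

lemma reduced_reduce_word: "reduced_word (reduce_word w)"
  by (simp add: reduce_word_foldr reduced_foldr_reduce_step)

lemma set_reduce_step: "set (reduce_step l acc) \<subseteq> insert l (set acc)"
  by (cases acc) (auto simp: reduce_step_Cons)

lemma set_foldr_reduce_step: "set (foldr reduce_step u acc) \<subseteq> set u \<union> set acc"
  by (induction u) (use set_reduce_step in fastforce)+

lemma foldr_reduce_step_reduce_step:
  assumes "reduced_word acc"
  shows "foldr reduce_step (reduce_step l r) acc = reduce_step l (foldr reduce_step r acc)"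
proof (cases r)
  case (Cons l' r')
  show ?thesis
  proof (cases "l' = inv_letter l")
    case True
    then have "foldr reduce_step r acc = reduce_step (inv_letter l) (foldr reduce_step r' acc)" using Cons by simp
    then show ?thesis using True Cons assms
      by (simp add: reduce_step_Cons reduce_step_inv_letter reduced_foldr_reduce_step)
  qed (use Cons in \<open>simp add: reduce_step_Cons\<close>)
qed simp

lemma foldr_reduce_word:
  assumes "reduced_word acc"
  shows "foldr reduce_step (reduce_word x) acc = foldr reduce_step x acc"
  by (induction x) (simp_all add: reduce_word_foldr foldr_reduce_step_reduce_step assms)

lemma reduce_word_append: "reduce_word (u @ w) = foldr reduce_step u (reduce_word w)"
  by (simp add: reduce_word_foldr)

lemma reduce_word_reduced: "reduced_word w \<Longrightarrow> reduce_word w = w"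
proof (induction w)
  case (Cons l w)
  then have "reduce_word w = w" using reduced_word_tl by blast
  then show ?case using Cons.prems
    by (cases w) (auto simp: reduce_word_foldr reduce_step_Cons reduced_Cons_Cons)
qed (simp add: reduce_word_foldr)

lemma foldr_inverse_cancel:
  assumes "reduced_word acc"
  shows "foldr reduce_step (rev (map inv_letter w) @ w) acc = acc"
proof (induction w)
  case (Cons l w)
  have "foldr reduce_step (rev (map inv_letter (l # w)) @ l # w) acc
      = foldr reduce_step (rev (map inv_letter w)) (reduce_step (inv_letter l) (reduce_step l (foldr reduce_step w acc)))"
    by simp
  also have "\<dots> = foldr reduce_step (rev (map inv_letter w)) (foldr reduce_step w acc)"
    using reduce_step_inv_letter[of _ "inv_letter l", simplified, OF reduced_foldr_reduce_step[OF assms]] by simp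
  also have "\<dots> = acc" using Cons.IH by simp
  finally show ?case .
qed simp

lemma set_reduce_word: "set (reduce_word w) \<subseteq> set w"
  using set_foldr_reduce_step[of w "[]"] by (simp add: reduce_word_foldr)

lemma reduce_word_assoc:
  "reduce_word (reduce_word (x @ y) @ z) = reduce_word (x @ reduce_word (y @ z))"
proof -
  have "reduce_word (reduce_word (x @ y) @ z) = foldr reduce_step (reduce_word (x @ y)) (reduce_word z)"
    by (rule reduce_word_append)
  also have "\<dots> = foldr reduce_step (x @ y) (reduce_word z)"
    by (rule foldr_reduce_word[OF reduced_reduce_word])
  also have "\<dots> = foldr reduce_step x (reduce_word (y @ z))"
    by (simp add: reduce_word_append)
  also have "\<dots> = foldr reduce_step x (reduce_word (reduce_word (y @ z)))"
    by (simp add: reduce_word_reduced[OF reduced_reduce_word])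
  also have "\<dots> = reduce_word (x @ reduce_word (y @ z))"
    by (rule reduce_word_append[symmetric])
  finally show ?thesis .
qed

lemma reduce_word_inverse: "reduce_word (reduce_word (rev (map inv_letter x)) @ x) = []"
proof -
  have "reduce_word (reduce_word (rev (map inv_letter x)) @ x)
      = foldr reduce_step (rev (map inv_letter x)) (reduce_word x)"
    by (simp add: reduce_word_append foldr_reduce_word reduced_reduce_word)
  also have "\<dots> = []"
    by (simp add: reduce_word_foldr foldr_inverse_cancel flip: foldr_append)
  finally show ?thesis .
qed

lemma group_free_group: "group (free_group S)"
proof (rule groupI)
  let ?F = "free_group S"
  show "x \<otimes>\<^bsub>?F\<^esub> y \<in> carrier ?F" if "x \<in> carrier ?F" "y \<in> carrier ?F" for x y
  proof -
    have "snd ` set (reduce_word (x @ y)) \<subseteq> snd ` set x \<union> snd ` set y"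
      using image_mono[OF set_reduce_word[of "x @ y"], of snd] by auto
    also have "\<dots> \<subseteq> S" using that by (simp add: free_group_def)
    finally show ?thesis by (simp add: free_group_def reduced_reduce_word)
  qed
  show "\<one>\<^bsub>?F\<^esub> \<in> carrier ?F" by (simp add: free_group_def)
  show "x \<otimes>\<^bsub>?F\<^esub> y \<otimes>\<^bsub>?F\<^esub> z = x \<otimes>\<^bsub>?F\<^esub> (y \<otimes>\<^bsub>?F\<^esub> z)" for x y z
    by (simp add: free_group_def reduce_word_assoc)
  show "\<one>\<^bsub>?F\<^esub> \<otimes>\<^bsub>?F\<^esub> x = x" if "x \<in> carrier ?F" for x
    using that by (simp add: free_group_def reduce_word_reduced)
  show "\<exists>y\<in>carrier ?F. y \<otimes>\<^bsub>?F\<^esub> x = \<one>\<^bsub>?F\<^esub>" if x: "x \<in> carrier ?F" for x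
  proof
    let ?y = "reduce_word (rev (map inv_letter x))"
    show "?y \<otimes>\<^bsub>?F\<^esub> x = \<one>\<^bsub>?F\<^esub>"
      by (simp add: free_group_def reduce_word_inverse)
    have "snd ` set ?y \<subseteq> snd ` set x"
      using set_reduce_word[of "rev (map inv_letter x)"] by (force simp: inv_letter_def)
    then show "?y \<in> carrier ?F"
      using x by (auto simp: free_group_def reduced_reduce_word)
  qed
qed

lemma free_gen_in: "x \<in> S \<Longrightarrow> free_gen x \<in> carrier (free_group S)"
  by (simp add: free_gen_def free_group_def)

definition letter :: "('g, 'b) monoid_scheme \<Rightarrow> bool \<times> 'g \<Rightarrow> 'g" where
  "letter G l = (if fst l then snd l else inv\<^bsub>G\<^esub> (snd l))"

lemma word_mult_Nil[simp]: "word_mult G [] = \<one>\<^bsub>G\<^esub>"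
  by (simp add: word_mult_def)

lemma word_mult_Cons: "word_mult G (l # w) = letter G l \<otimes>\<^bsub>G\<^esub> word_mult G w"
  by (cases l) (simp add: word_mult_def letter_def)

context group begin

lemma letter_closed: "snd l \<in> carrier G \<Longrightarrow> letter G l \<in> carrier G"
  by (simp add: letter_def)

lemma word_mult_closed: "snd ` set w \<subseteq> carrier G \<Longrightarrow> word_mult G w \<in> carrier G"
  by (induction w) (auto simp: word_mult_Cons letter_closed)

lemma letter_inv_letter: "snd l \<in> carrier G \<Longrightarrow> letter G l \<otimes> letter G (inv_letter l) = \<one>"
  by (cases l) (auto simp: letter_def inv_letter_def)

lemma word_mult_reduce_step:
  assumes "snd l \<in> carrier G" "snd ` set r \<subseteq> carrier G"
  shows "word_mult G (reduce_step l r) = letter G l \<otimes> word_mult G r"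
proof (cases r)
  case (Cons l' r')
  show ?thesis
  proof (cases "l' = inv_letter l")
    case True
    have c: "letter G l \<in> carrier G" "letter G l' \<in> carrier G" "word_mult G r' \<in> carrier G"
      using assms Cons by (auto intro!: letter_closed word_mult_closed)
    have "letter G l \<otimes> word_mult G r = (letter G l \<otimes> letter G l') \<otimes> word_mult G r'"
      using c Cons by (simp add: word_mult_Cons m_assoc)
    also have "\<dots> = word_mult G r'" using True assms c by (simp add: letter_inv_letter)
    finally show ?thesis using True Cons by (simp add: reduce_step_Cons)
  qed (use Cons in \<open>simp add: reduce_step_Cons word_mult_Cons\<close>)
qed (simp add: word_mult_Cons letter_closed assms)

lemma word_mult_foldr:
  assumes "snd ` set u \<subseteq> carrier G" "snd ` set acc \<subseteq> carrier G"
  shows "word_mult G (foldr reduce_step u acc) = word_mult G u \<otimes> word_mult G acc"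
  using assms(1)
proof (induction u)
  case (Cons l u)
  have s: "snd ` set (foldr reduce_step u acc) \<subseteq> carrier G"
    using set_foldr_reduce_step[of u acc] Cons.prems assms(2) by fastforce
  have c: "letter G l \<in> carrier G" "word_mult G u \<in> carrier G" "word_mult G acc \<in> carrier G"
    using Cons.prems assms(2) by (auto intro!: letter_closed word_mult_closed)
  show ?case using Cons s c by (simp add: word_mult_reduce_step word_mult_Cons m_assoc)
qed (simp add: word_mult_closed assms)

lemma word_mult_hom:
  assumes "S \<subseteq> carrier G"
  shows "word_mult G \<in> hom (free_group S) G"
proof (rule homI)
  fix x assume "x \<in> carrier (free_group S)"
  then show "word_mult G x \<in> carrier G" using assms by (intro word_mult_closed) (auto simp: free_group_def)
next
  fix x y assume xy: "x \<in> carrier (free_group S)" "y \<in> carrier (free_group S)"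
  then have s: "snd ` set x \<subseteq> carrier G" "snd ` set y \<subseteq> carrier G" using assms by (auto simp: free_group_def)
  have "word_mult G (reduce_word (x @ y)) = word_mult G (foldr reduce_step x (foldr reduce_step y []))"
    by (simp add: reduce_word_foldr)
  also have "\<dots> = word_mult G x \<otimes> word_mult G (foldr reduce_step y [])"
    using s set_foldr_reduce_step[of y "[]"] by (intro word_mult_foldr) force+
  also have "\<dots> = word_mult G x \<otimes> word_mult G y"
    using s by (simp add: word_mult_foldr word_mult_closed)
  finally show "word_mult G (x \<otimes>\<^bsub>free_group S\<^esub> y) = word_mult G x \<otimes> word_mult G y"
    by (simp add: free_group_def)
qed

lemma word_mult_gen: "x \<in> carrier G \<Longrightarrow> word_mult G (free_gen x) = x"
  by (simp add: free_gen_def word_mult_Cons letter_def)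

lemma word_mult_onto: "word_mult G ` carrier (free_group (carrier G)) = carrier G"
proof
  show "word_mult G ` carrier (free_group (carrier G)) \<subseteq> carrier G"
    using word_mult_hom[OF subset_refl] by (auto simp: hom_def)
  show "carrier G \<subseteq> word_mult G ` carrier (free_group (carrier G))"
    using word_mult_gen free_gen_in by (metis image_eqI subsetI)
qed

end

subsection \<open>The free topological group\<close>

definition free_group_topologies :: "'s topology \<Rightarrow> ((bool \<times> 's) list) topology set" where
  "free_group_topologies S =
     {T. group_topology (free_group (topspace S)) T \<and> continuous_map S T free_gen}"

lemma free_top_group_eq:
  "free_top_group S =
     topology_generated_by (\<Union> {Collect (openin T) | T. T \<in> free_group_topologies S})"
  unfolding free_top_group_def free_group_topologies_def by simp

text \<open>The indiscrete topology (pulled back from a point) belongs to the family, so the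
  family is nonempty and F_M(S) lives on the whole free group.\<close>
lemma indiscrete_in_free_group_topologies:
  "pullback_topology (carrier (free_group (topspace S))) (\<lambda>_. ()) (discrete_topology {()})
     \<in> free_group_topologies S"
proof -
  let ?F = "free_group (topspace S)"
  let ?P = "pullback_topology (carrier ?F) (\<lambda>_. ()) (discrete_topology {()})"
  interpret F: group ?F by (rule group_free_group)
  have ts: "topspace ?P = carrier ?F" by (simp add: topspace_pullback_topology)
  have "continuous_map (prod_topology ?P ?P) ?P (\<lambda>(x, y). x \<otimes>\<^bsub>?F\<^esub> y)"
    by (rule continuous_map_pullback') (auto simp: o_def ts)
  moreover have "continuous_map ?P ?P (\<lambda>x. inv\<^bsub>?F\<^esub> x)"
    by (rule continuous_map_pullback') (auto simp: o_def ts)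
  moreover have "continuous_map S ?P free_gen"
    by (rule continuous_map_pullback') (auto simp: o_def free_gen_in)
  ultimately show ?thesis
    unfolding free_group_topologies_def group_topology_def using F.is_group ts by simp
qed

lemma topspace_free_group_topologies:
  "T \<in> free_group_topologies S \<Longrightarrow> topspace T = carrier (free_group (topspace S))"
  by (simp add: free_group_topologies_def group_topology_def)

lemma topspace_free_top_group: "topspace (free_top_group S) = carrier (free_group (topspace S))"
proof -
  let ?B = "\<Union> {Collect (openin T) | T. T \<in> free_group_topologies S}"
  have "\<Union> ?B \<subseteq> carrier (free_group (topspace S))"
    using topspace_free_group_topologies openin_subset by blast
  moreover have "carrier (free_group (topspace S)) \<in> ?B"
    using indiscrete_in_free_group_topologies[of S]
      topspace_free_group_topologies[OF indiscrete_in_free_group_topologies[of S]]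
    by (metis (mono_tags, lifting) UnionI mem_Collect_eq openin_topspace)
  ultimately show ?thesis
    unfolding free_top_group_eq topology_generated_by_topspace by blast
qed

lemma openin_free_top_group:
  "T \<in> free_group_topologies S \<Longrightarrow> openin T U \<Longrightarrow> openin (free_top_group S) U"
  unfolding free_top_group_eq by (rule topology_generated_by_Basis) blast

lemma continuous_map_free_top_group_id:
  "T \<in> free_group_topologies S \<Longrightarrow> continuous_map (free_top_group S) T id"
  by (rule topology_finer_continuous_id[THEN iffD1])
     (auto simp: topspace_free_top_group topspace_free_group_topologies openin_free_top_group)

text \<open>A map into F_M(S) is continuous as soon as it is continuous into every member of
  the family (F_M(S) carries the supremum of these topologies).\<close>
lemma continuous_map_into_free_top_group:
  assumes cont: "\<And>T. T \<in> free_group_topologies S \<Longrightarrow> continuous_map Y T f"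
    and maps: "f \<in> topspace Y \<rightarrow> carrier (free_group (topspace S))"
  shows "continuous_map Y (free_top_group S) f"
  unfolding free_top_group_eq
proof (rule continuous_on_generated_topo)
  fix U assume "U \<in> \<Union> {Collect (openin T) | T. T \<in> free_group_topologies S}"
  then obtain T where "T \<in> free_group_topologies S" "openin T U" by blast
  then show "openin Y (f -` U \<inter> topspace Y)"
    using cont unfolding continuous_map_alt by blast
next
  show "f ` topspace Y \<subseteq> \<Union> (\<Union> {Collect (openin T) | T. T \<in> free_group_topologies S})"
    using maps topspace_free_top_group[of S]
    unfolding free_top_group_eq topology_generated_by_topspace by blast
qed

lemma group_topology_free_top_group:
  "group_topology (free_group (topspace S)) (free_top_group S)"
proof -
  let ?F = "free_group (topspace S)" and ?FT = "free_top_group S"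
  interpret F: group ?F by (rule group_free_group)
  note ts = topspace_free_top_group[of S]
  have mult: "continuous_map (prod_topology ?FT ?FT) ?FT (\<lambda>(x, y). x \<otimes>\<^bsub>?F\<^esub> y)"
  proof (rule continuous_map_into_free_top_group)
    fix T assume T: "T \<in> free_group_topologies S"
    have "continuous_map (prod_topology ?FT ?FT) (prod_topology T T) (\<lambda>(x, y). (id x, id y))"
      by (intro continuous_map_prod_top[THEN iffD2] disjI2 conjI continuous_map_free_top_group_id[OF T])
    moreover have "continuous_map (prod_topology T T) T (\<lambda>(x, y). x \<otimes>\<^bsub>?F\<^esub> y)"
      using T by (simp add: free_group_topologies_def group_topology_def)
    ultimately show "continuous_map (prod_topology ?FT ?FT) T (\<lambda>(x, y). x \<otimes>\<^bsub>?F\<^esub> y)"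
      by (auto dest: continuous_map_compose simp: o_def case_prod_unfold)
  qed (auto simp: ts)
  have inv: "continuous_map ?FT ?FT (\<lambda>x. inv\<^bsub>?F\<^esub> x)"
  proof (rule continuous_map_into_free_top_group)
    fix T assume T: "T \<in> free_group_topologies S"
    have "continuous_map T T (\<lambda>x. inv\<^bsub>?F\<^esub> x)"
      using T by (simp add: free_group_topologies_def group_topology_def)
    then show "continuous_map ?FT T (\<lambda>x. inv\<^bsub>?F\<^esub> x)"
      using continuous_map_compose[OF continuous_map_free_top_group_id[OF T]] by (simp add: o_def)
  qed (auto simp: ts)
  show ?thesis
    unfolding group_topology_def using F.is_group ts mult inv by blast
qed

lemma continuous_map_free_gen: "continuous_map S (free_top_group S) free_gen"
  by (rule continuous_map_into_free_top_group) (auto simp: free_group_topologies_def free_gen_in)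

subsection \<open>tau(G) is the finest group topology coarser than the topology of G\<close>

lemma tau_top_eq:
  "tau_top G Q = quotient_top (carrier (free_group (carrier G))) (free_top_group Q) (word_mult G) (carrier G)"
  unfolding tau_top_def quotient_top_def ..

lemma group_topology_tau_top:
  assumes G: "group G" and tQ: "topspace Q = carrier G"
  shows "group_topology G (tau_top G Q)"
  unfolding tau_top_eq
proof (rule group_topology_quotient[OF _ G])
  show "group_topology (free_group (carrier G)) (free_top_group Q)"
    using group_topology_free_top_group[of Q] by (simp add: tQ)
  show "word_mult G \<in> hom (free_group (carrier G)) G"
    by (rule group.word_mult_hom[OF G subset_refl])
  show "word_mult G ` carrier (free_group (carrier G)) = carrier G"
    by (rule group.word_mult_onto[OF G])
qed

text \<open>tau is coarser than Q: a tau-open U is the preimage of its m_G-saturation under the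
  continuous generator map Q -> F_M(Q).\<close>
lemma tau_top_coarser:
  assumes G: "group G" and tQ: "topspace Q = carrier G" and U: "openin (tau_top G Q) U"
  shows "openin Q U"
proof -
  let ?W = "{w \<in> carrier (free_group (carrier G)). word_mult G w \<in> U}"
  have Uc: "U \<subseteq> carrier G" and W: "openin (free_top_group Q) ?W"
    using U unfolding tau_top_eq openin_quotient_top by auto
  have "{x \<in> topspace Q. free_gen x \<in> ?W} = U"
    using Uc by (auto simp: tQ free_gen_in group.word_mult_gen[OF G])
  moreover have "openin Q {x \<in> topspace Q. free_gen x \<in> ?W}"
    using continuous_map_free_gen W by (rule openin_continuous_map_preimage)
  ultimately show ?thesis by simp
qed

text \<open>tau is finest: if T is a group topology coarser than Q, then its pullback along m_G
  is a group topology on the free group in which the generators are continuous, hence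
  coarser than F_M(Q); so every T-open set has an open m_G-preimage.\<close>
lemma tau_top_finest:
  assumes G: "group G" and tQ: "topspace Q = carrier G" and T: "group_topology G T"
    and coarser: "\<And>V. openin T V \<Longrightarrow> openin Q V" and U: "openin T U"
  shows "openin (tau_top G Q) U"
proof -
  let ?F = "free_group (carrier G)"
  let ?P = "pullback_topology (carrier ?F) (word_mult G) T"
  have tT: "topspace T = carrier G" using T by (simp add: group_topology_def)
  have "group_topology ?F ?P"
    by (rule group_topology_pullback[OF T group_free_group group.word_mult_hom[OF G subset_refl]])
  moreover have "continuous_map Q ?P free_gen"
  proof (rule continuous_map_pullback')
    have "continuous_map Q T id"
      by (rule topology_finer_continuous_id[THEN iffD1]) (use tQ tT coarser in auto)
    then show "continuous_map Q T (word_mult G \<circ> free_gen)"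
      by (rule continuous_map_eq) (simp add: tQ group.word_mult_gen[OF G])
  qed (auto simp: tQ free_gen_in)
  ultimately have "?P \<in> free_group_topologies Q"
    by (simp add: free_group_topologies_def tQ)
  moreover have "openin ?P {w \<in> carrier ?F. word_mult G w \<in> U}"
    unfolding openin_pullback_topology using U by blast
  ultimately have "openin (free_top_group Q) {w \<in> carrier ?F. word_mult G w \<in> U}"
    by (rule openin_free_top_group)
  then show ?thesis
    using openin_subset[OF U] tT unfolding tau_top_eq openin_quotient_top by simp
qed

subsection \<open>The quotient topology of pi_1\<close>

lemma topspace_loop_space_top: "topspace (loop_space_top X x0) = loop_space X x0"
proof -
  have "loop_space X x0 \<in> {{g \<in> loop_space X x0. g ` K \<subseteq> U} | K U.
      compactin (subtopology euclideanreal {0..1}) K \<and> openin X U}"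
    by (intro CollectI exI[of _ "{}"] exI[of _ "topspace X"]) auto
  then show ?thesis
    unfolding loop_space_top_def topology_generated_by_topspace by blast
qed

lemma quotient_map_loop_class:
  "quotient_map (loop_space_top X x0) (pi1_qtop X x0) (loop_class X x0)"
proof -
  have "pi1_qtop X x0 = quotient_top (loop_space X x0) (loop_space_top X x0) (loop_class X x0)
                           (carrier (fundamental_group X x0))"
    unfolding pi1_qtop_def quotient_top_def ..
  then show ?thesis
    by (simp add: quotient_map_quotient_top topspace_loop_space_top fundamental_group_carrier)
qed

lemma topspace_pi1_qtop: "topspace (pi1_qtop X x0) = carrier (fundamental_group X x0)"
  using quotient_imp_surjective_map[OF quotient_map_loop_class, of X x0]
  by (simp add: topspace_loop_space_top fundamental_group_carrier)

lemma pi1_qtop_finest: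
  assumes cont: "continuous_map (loop_space_top X x0) T (loop_class X x0)"
    and tT: "topspace T = carrier (fundamental_group X x0)" and U: "openin T U"
  shows "openin (pi1_qtop X x0) U"
proof -
  have "continuous_map (loop_space_top X x0) T (id \<circ> loop_class X x0)"
    using cont by simp
  then have "continuous_map (pi1_qtop X x0) T id"
    by (rule continuous_compose_quotient_map[OF quotient_map_loop_class])
  then show ?thesis
    using topology_finer_continuous_id[of T "pi1_qtop X x0"] U
    by (simp add: tT topspace_pi1_qtop)
qed

lemma continuous_map_finer_than_pullback:
  assumes tS: "topspace S = A" and maps: "f \<in> A \<rightarrow> topspace T"
    and finer: "\<And>U. openin (pullback_topology A f T) U \<Longrightarrow> openin S U"
  shows "continuous_map S T f"
proof -
  have "topspace (pullback_topology A f T) = A"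
    using maps by (auto simp: topspace_pullback_topology)
  then have "continuous_map S (pullback_topology A f T) id"
    using finer tS by (intro topology_finer_continuous_id[THEN iffD1]) auto
  moreover have "continuous_map (pullback_topology A f T) T f"
    using continuous_map_pullback[OF continuous_map_id[of T], of A f] by simp
  ultimately show ?thesis
    using continuous_map_compose by fastforce
qed

theorem theorem3p12:
  fixes X :: "'a topology" and x0 :: 'a
  assumes "x0 \<in> topspace X"
  shows "(group_topology (fundamental_group X x0) (pi1_tau X x0)
          \<and> continuous_map (loop_space_top X x0) (pi1_tau X x0) (loop_class X x0)
          \<and> (\<forall>T. group_topology (fundamental_group X x0) T
                 \<and> continuous_map (loop_space_top X x0) T (loop_class X x0)
                 \<longrightarrow> (\<forall>U. openin T U \<longrightarrow> openin (pi1_tau X x0) U)))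
       \<and> (\<forall>(G :: 'g monoid) TG \<Phi>.
            group_topology G TG \<and> \<Phi> \<in> hom (fundamental_group X x0) G
            \<and> continuous_map (loop_space_top X x0) TG (\<Phi> \<circ> loop_class X x0)
            \<longrightarrow> continuous_map (pi1_tau X x0) TG \<Phi>)"
proof -
  let ?G = "fundamental_group X x0" and ?L = "loop_space_top X x0" and ?p = "loop_class X x0"
  let ?Q = "pi1_qtop X x0" and ?tau = "pi1_tau X x0"
  have G: "group ?G" by (rule group_fundamental_group[OF assms])
  note tQ = topspace_pi1_qtop[of X x0]
  have gt: "group_topology ?G ?tau"
    unfolding pi1_tau_def using G tQ by (rule group_topology_tau_top)
  have "continuous_map ?Q ?tau id"
    using gt tau_top_coarser[OF G tQ] unfolding pi1_tau_def
    by (intro topology_finer_continuous_id[THEN iffD1]) (auto simp: tQ group_topology_def)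
  then have cont: "continuous_map ?L ?tau ?p"
    using continuous_map_compose[OF quotient_imp_continuous_map[OF quotient_map_loop_class]]
    by fastforce
  have finest: "openin ?tau U"
    if T: "group_topology ?G T" and pT: "continuous_map ?L T ?p" and U: "openin T U" for T U
    unfolding pi1_tau_def using G tQ T pi1_qtop_finest[OF pT] U
    by (intro tau_top_finest) (auto simp: group_topology_def)
  have universal: "continuous_map ?tau TG \<Phi>"
    if TG: "group_topology H TG" and \<Phi>: "\<Phi> \<in> hom ?G H" and c\<Phi>: "continuous_map ?L TG (\<Phi> \<circ> ?p)"
    for H :: "'g monoid" and TG \<Phi>
  proof (rule continuous_map_finer_than_pullback)
    let ?T = "pullback_topology (carrier ?G) \<Phi> TG"
    have "continuous_map ?L ?T ?p"
      using c\<Phi> by (rule continuous_map_pullback') (auto simp: topspace_loop_space_top fundamental_group_carrier)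
    then show "openin ?tau U" if "openin ?T U" for U
      using finest group_topology_pullback[OF TG G \<Phi>] that by blast
    show "topspace ?tau = carrier ?G" using gt by (simp add: group_topology_def)
    show "\<Phi> \<in> carrier ?G \<rightarrow> topspace TG" using \<Phi> TG by (auto simp: hom_def group_topology_def)
  qed
  show ?thesis using gt cont finest universal by blast
qed

end
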